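(* There exists an absolute constant $c\in(0,1]$ such that for every sufficiently large positive integer $n$ there exist a quartic form $q(x_1,\dots,x_n)=\sum_{\alpha\in\{0,1\}^n,\,|\alpha|=4}d_\alpha x^\alpha$ with $|q(x)|\le1$ for all $x\in\{-1,1\}^n$, and pairwise commuting contractions $A_1,\dots,A_n\in L(\mathbb{R}^{2n+2})$, such that $$\Big\|\sum_{i,j,k,\ell=1}^n(T_q)_{i,j,k,\ell}A_iA_jA_kA_\ell\Big\|\ge c\sqrt n.$$
   Context: For a form $q(x)=\sum_{|\alpha|=4}d_\alpha x^\alpha$, $T_q\in\mathbb{R}^{n\times n\times n\times n}$ is the symmetric tensor $(T_q)_{i,j,k,\ell}=d_{e_i+e_j+e_k+e_\ell}/\tau(i,j,k,\ell)$, where $\tau$ is the number of distinct permutations of $(i,j,k,\ell)$. A contraction is a linear map of operator norm at most $1$; $\|\cdot\|$ denotes the operator norm. *)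

theory Defs
  imports Complex_Main "Jordan_Normal_Form.Matrix"
begin

definition eucl_vnorm :: "real vec \<Rightarrow> real" where
  "eucl_vnorm v = sqrt (\<Sum>i<dim_vec v. (v $ i)\<^sup>2)"

definition mat_op_norm :: "real mat \<Rightarrow> real" where
  "mat_op_norm A = Sup {eucl_vnorm (mult_mat_vec A v) | v. v \<in> carrier_vec (dim_col A) \<and> eucl_vnorm v \<le> 1}"

definition ml_quartic_exps :: "nat \<Rightarrow> (nat \<Rightarrow> nat) set" where
  "ml_quartic_exps n = {\<alpha>. (\<forall>m. \<alpha> m \<le> 1) \<and> (\<forall>m\<ge>n. \<alpha> m = 0) \<and> (\<Sum>m<n. \<alpha> m) = 4}"

definition qform :: "nat \<Rightarrow> ((nat \<Rightarrow> nat) \<Rightarrow> real) \<Rightarrow> (nat \<Rightarrow> real) \<Rightarrow> real" where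
  "qform n d x = (\<Sum>\<alpha>\<in>ml_quartic_exps n. d \<alpha> * (\<Prod>m<n. x m ^ \<alpha> m))"

definition tau4 :: "nat \<Rightarrow> nat \<Rightarrow> nat \<Rightarrow> nat \<Rightarrow> nat" where
  "tau4 i j k l = card {xs. mset xs = mset [i, j, k, l]}"

definition Tq :: "((nat \<Rightarrow> nat) \<Rightarrow> real) \<Rightarrow> nat \<Rightarrow> nat \<Rightarrow> nat \<Rightarrow> nat \<Rightarrow> real" where
  "Tq d i j k l = d (\<lambda>m. count (mset [i, j, k, l]) m) / real (tau4 i j k l)"

definition tensor_eval :: "nat \<Rightarrow> nat \<Rightarrow> ((nat \<Rightarrow> nat) \<Rightarrow> real) \<Rightarrow> (nat \<Rightarrow> real mat) \<Rightarrow> real mat" where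
  "tensor_eval N n d A = mat N N (\<lambda>(r, s).
     \<Sum>i<n. \<Sum>j<n. \<Sum>k<n. \<Sum>l<n. Tq d i j k l * ((A i * A j * A k * A l) $$ (r, s)))"

end

theory Submission
  imports Defs "HOL-Combinatorics.Multiset_Permutations"
begin

text \<open>Split the variables into blocks a < p, p + b, 2p + a + b (a, b < p) and a last variable
  w = 4p - 1, where p = n div 4. The cubic form \<Sum>\<sigma>(a,b) x(a) x(p+b) x(2p+a+b) with signs \<sigma> has
  p^2 terms, but by a Chernoff bound and a union bound over the 2^(4p) sign vectors x there is a
  choice of \<sigma> for which it is at most s = 6 p sqrt p in absolute value on the cube; the quartic
  form q = x(w)/s times it is then bounded by 1 on the cube.

  The triples {a, p + b, 2p + a + b} pairwise share at most one point, so the symmetric tensor t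
  carrying the signs \<sigma> on them has at most one nonzero entry in each row of every slice t(\<cdot>,i,\<cdot>).
  On R \<oplus> R^n \<oplus> R^n \<oplus> R let A(i) map the first summand to e(i), the second to the third by the
  matrix t(\<cdot>,i,\<cdot>), and the third to the last by the i-th coordinate; let A(w) be the identity.
  These operators commute by the symmetry of t and are contractions by its sparsity, and the
  corner entry of \<Sum>T_q(i,j,k,l) A(i)A(j)A(k)A(l) counts each of the p^2 triples with weight
  \<sigma>(a,b)^2/s, giving p^2/s = sqrt p / 6 \<ge> sqrt n / 17.\<close>

section \<open>Chernoff bound for random signs\<close>

lemma exp_add_exp_uminus_le:
  fixes l :: real assumes "0 \<le> l" "l \<le> 1"
  shows "exp l + exp (-l) \<le> 2 * exp (l^2)"
proof -
  have e1: "exp l \<le> 1 + l + l^2" using exp_bound assms by blast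
  have "1 + l \<le> exp l" using exp_ge_add_one_self by simp
  hence "exp (-l) \<le> 1 / (1 + l)" using assms by (simp add: exp_minus divide_simps)
  also have "\<dots> \<le> 1 - l + l^2"
    using assms by (simp add: divide_simps power2_eq_square) (simp add: algebra_simps mult_nonneg_nonneg)
  finally have "exp l + exp (-l) \<le> 2 + 2 * l^2" using e1 by simp
  also have "\<dots> \<le> 2 * exp (l^2)" using exp_ge_add_one_self[of "l^2"] by linarith
  finally show ?thesis .
qed

lemma sum_signs_exp_sum:
  fixes c :: "'a \<Rightarrow> real"
  assumes I: "finite I" and c: "\<And>e. e \<in> I \<Longrightarrow> c e \<in> {-1,1}"
  shows "(\<Sum>\<sigma>\<in>PiE I (\<lambda>_. {-1,1::real}). exp (l * (\<Sum>e\<in>I. \<sigma> e * c e)))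
        = (exp l + exp (-l)) ^ card I"
proof -
  have "(\<Sum>\<sigma>\<in>PiE I (\<lambda>_. {-1,1::real}). exp (l * (\<Sum>e\<in>I. \<sigma> e * c e)))
      = (\<Sum>\<sigma>\<in>PiE I (\<lambda>_. {-1,1::real}). \<Prod>e\<in>I. exp (l * c e * \<sigma> e))"
    by (intro sum.cong refl) (simp add: sum_distrib_left exp_sum[OF I] algebra_simps)
  also have "\<dots> = (\<Prod>e\<in>I. \<Sum>y\<in>{-1,1::real}. exp (l * c e * y))"
    by (rule prod_sum_PiE[symmetric]) (use I in auto)
  also have "\<dots> = (\<Prod>e\<in>I. exp l + exp (-l))"
  proof (intro prod.cong refl)
    fix e assume "e \<in> I"
    then have "c e = -1 \<or> c e = 1" using c by auto
    then show "(\<Sum>y\<in>{-1,1::real}. exp (l * c e * y)) = exp l + exp (-l)" by auto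
  qed
  also have "\<dots> = (exp l + exp (-l)) ^ card I" by simp
  finally show ?thesis .
qed

lemma card_signs_sum_gt_le:
  fixes c :: "'a \<Rightarrow> real"
  assumes I: "finite I" and c: "\<And>e. e \<in> I \<Longrightarrow> c e \<in> {-1,1}"
    and l: "0 \<le> l" "l \<le> 1"
  shows "real (card {\<sigma>\<in>PiE I (\<lambda>_. {-1,1::real}). (\<Sum>e\<in>I. \<sigma> e * c e) > s}) * exp (l * s)
         \<le> 2 ^ card I * exp (real (card I) * l^2)"
proof -
  let ?P = "PiE I (\<lambda>_. {-1,1::real})"
  let ?B = "{\<sigma>\<in>?P. (\<Sum>e\<in>I. \<sigma> e * c e) > s}"
  have fP: "finite ?P" using I by (intro finite_PiE) auto
  have "real (card ?B) * exp (l * s) = (\<Sum>\<sigma>\<in>?B. exp (l * s))" by simp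
  also have "\<dots> \<le> (\<Sum>\<sigma>\<in>?B. exp (l * (\<Sum>e\<in>I. \<sigma> e * c e)))"
    using l by (intro sum_mono) (auto intro: mult_left_mono)
  also have "\<dots> \<le> (\<Sum>\<sigma>\<in>?P. exp (l * (\<Sum>e\<in>I. \<sigma> e * c e)))"
    by (intro sum_mono2 fP) auto
  also have "\<dots> = (exp l + exp (-l)) ^ card I" by (rule sum_signs_exp_sum[OF I c])
  also have "\<dots> \<le> (2 * exp (l^2)) ^ card I"
    by (intro power_mono exp_add_exp_uminus_le l) (simp add: add_nonneg_nonneg)
  also have "\<dots> = 2 ^ card I * exp (real (card I) * l^2)"
    by (simp add: power_mult_distrib exp_of_nat_mult)
  finally show ?thesis .
qed

lemma card_signs_abs_sum_gt_le:
  fixes c :: "'a \<Rightarrow> real"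
  assumes I: "finite I" and c: "\<And>e. e \<in> I \<Longrightarrow> c e \<in> {-1,1}"
    and l: "0 \<le> l" "l \<le> 1"
  shows "real (card {\<sigma>\<in>PiE I (\<lambda>_. {-1,1::real}). \<bar>\<Sum>e\<in>I. \<sigma> e * c e\<bar> > s})
         \<le> 2 * 2 ^ card I * exp (real (card I) * l^2 - l * s)"
proof -
  let ?P = "PiE I (\<lambda>_. {-1,1::real})"
  let ?A = "{\<sigma>\<in>?P. (\<Sum>e\<in>I. \<sigma> e * c e) > s}"
  let ?B = "{\<sigma>\<in>?P. (\<Sum>e\<in>I. \<sigma> e * (- c e)) > s}"
  let ?C = "{\<sigma>\<in>?P. \<bar>\<Sum>e\<in>I. \<sigma> e * c e\<bar> > s}"
  let ?K = "2 ^ card I * exp (real (card I) * l^2)"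
  have fP: "finite ?P" using I by (intro finite_PiE) auto
  have c': "\<And>e. e \<in> I \<Longrightarrow> - c e \<in> {-1,1}" using c by force
  have neg: "(\<Sum>e\<in>I. \<sigma> e * (- c e)) = - (\<Sum>e\<in>I. \<sigma> e * c e)" for \<sigma>
    by (simp add: sum_negf[symmetric])
  have sub: "?C \<subseteq> ?A \<union> ?B"
  proof
    fix \<sigma> assume "\<sigma> \<in> ?C"
    then show "\<sigma> \<in> ?A \<union> ?B" unfolding neg by (cases "(\<Sum>e\<in>I. \<sigma> e * c e) \<ge> 0") auto
  qed
  have "card ?C \<le> card (?A \<union> ?B)"
    using fP by (intro card_mono sub) auto
  also have "\<dots> \<le> card ?A + card ?B" by (rule card_Un_le)
  finally have "real (card ?C) \<le> real (card ?A) + real (card ?B)" by linarith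
  also have "real (card ?A) \<le> ?K / exp (l * s)"
    using card_signs_sum_gt_le[OF I c l, where s=s] by (simp add: pos_le_divide_eq)
  also have "real (card ?B) \<le> ?K / exp (l * s)"
    using card_signs_sum_gt_le[OF I c' l, where s=s] by (simp add: pos_le_divide_eq)
  also have "?K / exp (l * s) + ?K / exp (l * s) = 2 * 2 ^ card I * exp (real (card I) * l^2 - l * s)"
    by (simp add: exp_diff)
  finally show ?thesis by simp
qed

lemma exists_signs_abs_sums_le:
  fixes c :: "'b \<Rightarrow> 'a \<Rightarrow> real"
  assumes I: "finite I" and Y: "finite Y" and c: "\<And>y e. y \<in> Y \<Longrightarrow> e \<in> I \<Longrightarrow> c y e \<in> {-1,1}"
    and l: "0 \<le> l" "l \<le> 1"
    and small: "real (card Y) * (2 * exp (real (card I) * l^2 - l * s)) < 1"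
  shows "\<exists>\<sigma>\<in>PiE I (\<lambda>_. {-1,1::real}). \<forall>y\<in>Y. \<bar>\<Sum>e\<in>I. \<sigma> e * c y e\<bar> \<le> s"
proof (rule ccontr)
  let ?P = "PiE I (\<lambda>_. {-1,1::real})"
  have fP: "finite ?P" using I by (intro finite_PiE) auto
  assume "\<not> ?thesis"
  hence "?P \<subseteq> (\<Union>y\<in>Y. {\<sigma>\<in>?P. \<bar>\<Sum>e\<in>I. \<sigma> e * c y e\<bar> > s})" by force
  hence "real (card ?P) \<le> real (card (\<Union>y\<in>Y. {\<sigma>\<in>?P. \<bar>\<Sum>e\<in>I. \<sigma> e * c y e\<bar> > s}))"
    using fP Y by (intro of_nat_mono card_mono) auto
  also have "\<dots> \<le> real (\<Sum>y\<in>Y. card {\<sigma>\<in>?P. \<bar>\<Sum>e\<in>I. \<sigma> e * c y e\<bar> > s})"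
    by (intro of_nat_mono card_UN_le Y)
  also have "\<dots> \<le> (\<Sum>y\<in>Y. 2 * 2 ^ card I * exp (real (card I) * l^2 - l * s))"
    unfolding of_nat_sum by (intro sum_mono card_signs_abs_sum_gt_le[OF I _ l]) (use c in auto)
  also have "\<dots> = 2 ^ card I * (real (card Y) * (2 * exp (real (card I) * l^2 - l * s)))"
    by simp
  also have "\<dots> < 2 ^ card I" using small by simp
  also have "real (card ?P) = 2 ^ card I" using I by (simp add: card_PiE)
  finally show False by simp
qed

section \<open>Entries and the operator norm\<close>

lemma abs_vec_nth_le_eucl_vnorm: "r < dim_vec v \<Longrightarrow> \<bar>v $ r\<bar> \<le> eucl_vnorm v"
proof -
  assume r: "r < dim_vec v"
  have "(v $ r)^2 \<le> (\<Sum>i<dim_vec v. (v $ i)^2)"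
    using r by (intro member_le_sum[where f="\<lambda>i. (v $ i)^2"]) auto
  hence "sqrt ((v $ r)^2) \<le> eucl_vnorm v" unfolding eucl_vnorm_def by (rule real_sqrt_le_mono)
  thus ?thesis by simp
qed

lemma bdd_above_mat_op_norm_set: "bdd_above {eucl_vnorm (mult_mat_vec A v) | v. v \<in> carrier_vec (dim_col A) \<and> eucl_vnorm v \<le> 1}"
proof -
  define K where "K r = (\<Sum>s<dim_col A. \<bar>A $$ (r,s)\<bar>)" for r
  have K0: "0 \<le> K r" for r unfolding K_def by (intro sum_nonneg) auto
  have "eucl_vnorm (A *\<^sub>v v) \<le> sqrt (\<Sum>r<dim_row A. (K r)^2)"
    if v: "v \<in> carrier_vec (dim_col A)" "eucl_vnorm v \<le> 1" for v
  proof -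
    have "((A *\<^sub>v v) $ r)^2 \<le> (K r)^2" if r: "r < dim_row A" for r
    proof -
      have "(A *\<^sub>v v) $ r = (\<Sum>s<dim_col A. A $$ (r,s) * v $ s)"
        using r v by (simp add: scalar_prod_def atLeast0LessThan)
      also have "\<bar>\<dots>\<bar> \<le> (\<Sum>s<dim_col A. \<bar>A $$ (r,s) * v $ s\<bar>)" by (rule sum_abs)
      also have "\<dots> \<le> (\<Sum>s<dim_col A. \<bar>A $$ (r,s)\<bar> * 1)"
      proof (intro sum_mono)
        fix s assume "s \<in> {..<dim_col A}"
        hence "\<bar>v $ s\<bar> \<le> 1" using abs_vec_nth_le_eucl_vnorm[of s v] v by auto
        thus "\<bar>A $$ (r,s) * v $ s\<bar> \<le> \<bar>A $$ (r,s)\<bar> * 1"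
          using mult_left_mono[of "\<bar>v $ s\<bar>" 1 "\<bar>A $$ (r,s)\<bar>"] by (simp add: abs_mult)
      qed
      finally have "\<bar>(A *\<^sub>v v) $ r\<bar> \<le> \<bar>K r\<bar>" using K0[of r] by (simp add: K_def)
      thus ?thesis by (simp add: abs_le_square_iff)
    qed
    hence "(\<Sum>r<dim_row A. ((A *\<^sub>v v) $ r)^2) \<le> (\<Sum>r<dim_row A. (K r)^2)" by (intro sum_mono) auto
    thus ?thesis unfolding eucl_vnorm_def by (simp add: real_sqrt_le_mono)
  qed
  thus ?thesis unfolding bdd_above_def by blast
qed

lemma eucl_vnorm_mult_le_mat_op_norm:
  assumes "v \<in> carrier_vec (dim_col A)" "eucl_vnorm v \<le> 1"
  shows "eucl_vnorm (A *\<^sub>v v) \<le> mat_op_norm A"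
  unfolding mat_op_norm_def by (rule cSup_upper[OF _ bdd_above_mat_op_norm_set]) (use assms in blast)

lemma mat_op_norm_le_oneI:
  fixes A :: "real mat"
  assumes "\<And>v :: real vec. v \<in> carrier_vec (dim_col A) \<Longrightarrow> eucl_vnorm (A *\<^sub>v v) \<le> eucl_vnorm v"
  shows "mat_op_norm A \<le> 1"
  unfolding mat_op_norm_def
proof (rule cSup_least)
  have "eucl_vnorm (0\<^sub>v (dim_col A) :: real vec) = 0" by (simp add: eucl_vnorm_def)
  thus "{eucl_vnorm (A *\<^sub>v v) |v. v \<in> carrier_vec (dim_col A) \<and> eucl_vnorm v \<le> 1} \<noteq> {}"
    by (intro notI) (metis (mono_tags, lifting) empty_iff mem_Collect_eq order_refl zero_carrier_vec zero_le_one)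
  fix x assume "x \<in> {eucl_vnorm (A *\<^sub>v v) |v. v \<in> carrier_vec (dim_col A) \<and> eucl_vnorm v \<le> 1}"
  then obtain v where "x = eucl_vnorm (A *\<^sub>v v)" "v \<in> carrier_vec (dim_col A)" "eucl_vnorm v \<le> 1" by blast
  thus "x \<le> 1" using assms by force
qed

lemma mat_entry_eq_mult_unit_vec:
  fixes M :: "'a::comm_ring_1 mat"
  assumes "M \<in> carrier_mat N N" "r < N" "s < N"
  shows "M $$ (r, s) = (M *\<^sub>v unit_vec N s) $ r"
  using assms by simp

lemma abs_entry_le_mat_op_norm:
  fixes M :: "real mat"
  assumes M: "M \<in> carrier_mat N N" and r: "r < N" and s: "s < N"
  shows "\<bar>M $$ (r,s)\<bar> \<le> mat_op_norm M"
proof -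
  let ?e = "unit_vec N s :: real vec"
  have en: "eucl_vnorm ?e = 1"
  proof -
    have "(\<Sum>i<N. (?e $ i)^2) = (\<Sum>i<N. if i = s then 1 else 0)"
      using s by (intro sum.cong refl) simp
    also have "\<dots> = 1" using s by simp
    finally show ?thesis unfolding eucl_vnorm_def by simp
  qed
  have "\<bar>M $$ (r,s)\<bar> = \<bar>(M *\<^sub>v ?e) $ r\<bar>" using mat_entry_eq_mult_unit_vec[OF M r s] by simp
  also have "\<dots> \<le> eucl_vnorm (M *\<^sub>v ?e)" using M r by (intro abs_vec_nth_le_eucl_vnorm) simp
  also have "\<dots> \<le> mat_op_norm M" using M en by (intro eucl_vnorm_mult_le_mat_op_norm) auto
  finally show ?thesis .
qed

lemma mat_mult4_entry:
  fixes A B C D :: "'a::comm_ring_1 mat"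
  assumes "A \<in> carrier_mat N N" "B \<in> carrier_mat N N" "C \<in> carrier_mat N N" "D \<in> carrier_mat N N"
    and "r < N" "s < N"
  shows "(A * B * C * D) $$ (r, s) = (A *\<^sub>v (B *\<^sub>v (C *\<^sub>v (D *\<^sub>v unit_vec N s)))) $ r"
proof -
  have "(A * B * C * D) $$ (r, s) = ((A * B * C * D) *\<^sub>v unit_vec N s) $ r"
    using assms by simp
  also have "(A * B * C * D) *\<^sub>v unit_vec N s = A *\<^sub>v (B *\<^sub>v (C *\<^sub>v (D *\<^sub>v unit_vec N s)))"
    using assms by (simp add: assoc_mult_mat_vec[of _ N N _ N])
  finally show ?thesis .
qed

lemma mat_mult_commuteI:
  fixes A B :: "'a::comm_ring_1 mat"
  assumes A: "A \<in> carrier_mat N N" and B: "B \<in> carrier_mat N N"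
    and AB: "\<And>u. u \<in> carrier_vec N \<Longrightarrow> A *\<^sub>v (B *\<^sub>v u) = B *\<^sub>v (A *\<^sub>v u)"
  shows "A * B = B * A"
proof (rule eq_matI)
  fix r s assume "r < dim_row (B * A)" "s < dim_col (B * A)"
  hence r: "r < N" and s: "s < N" using A B by auto
  have "A * B *\<^sub>v unit_vec N s = A *\<^sub>v (B *\<^sub>v unit_vec N s)"
    using A B by (intro assoc_mult_mat_vec) auto
  moreover have "B * A *\<^sub>v unit_vec N s = B *\<^sub>v (A *\<^sub>v unit_vec N s)"
    using A B by (intro assoc_mult_mat_vec) auto
  ultimately show "(A * B) $$ (r, s) = (B * A) $$ (r, s)"
    using A B r s mat_entry_eq_mult_unit_vec[of "A * B" N r s] mat_entry_eq_mult_unit_vec[of "B * A" N r s]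
    by (simp add: AB)
qed (use A B in auto)

section \<open>Commuting contractions from a sparse symmetric tensor\<close>

lemma sum_lessThan_add: "(\<Sum>s<m+k. f s) = (\<Sum>s<m. f s) + (\<Sum>c<k. f (m+c))"
  for f :: "nat \<Rightarrow> real"
  by (induction k) (simp_all add: add.assoc)

lemma sum_split_levels:
  fixes f :: "nat \<Rightarrow> real"
  shows "(\<Sum>s<2*n+2. f s) = f 0 + (\<Sum>c<n. f (Suc c)) + (\<Sum>c<n. f (Suc n + c)) + f (2*n+1)"
proof -
  have e: "2*n+2 = Suc (Suc (n+n))" by simp
  have "(\<Sum>s<2*n+2. f s) = (\<Sum>s<Suc (n+n). f s) + f (2*n+1)" unfolding e by (simp add: mult_2)
  also have "(\<Sum>s<Suc (n+n). f s) = f 0 + (\<Sum>s<n+n. f (Suc s))"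
    by (rule sum.lessThan_Suc_shift)
  also have "(\<Sum>s<n+n. f (Suc s)) = (\<Sum>c<n. f (Suc c)) + (\<Sum>c<n. f (Suc n + c))"
    by (subst sum_lessThan_add) simp
  finally show ?thesis by simp
qed

lemma sum_if_eq_mult [simp]:
  "finite A \<Longrightarrow> (\<Sum>c\<in>A. (if c = i then x else 0) * f c) = (if i \<in> A then x * f i else (0::real))"
  by (simp add: if_distrib[of "\<lambda>y. y * _"] cong: if_cong)

lemma sum_mult_if_eq [simp]:
  "finite A \<Longrightarrow> (\<Sum>c\<in>A. f c * (if c = i then x else 0)) = (if i \<in> A then f i * x else (0::real))"
  by (simp add: if_distrib[of "\<lambda>y. _ * y"] cong: if_cong)

definition sparse_sym_tensor :: "(nat \<Rightarrow> nat \<Rightarrow> nat \<Rightarrow> real) \<Rightarrow> bool" where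
  "sparse_sym_tensor t = ((\<forall>a b c. t a b c = t b a c \<and> t a b c = t a c b) \<and> (\<forall>a b c. \<bar>t a b c\<bar> \<le> 1)
     \<and> (\<forall>a i c c'. t a i c \<noteq> 0 \<longrightarrow> t a i c' \<noteq> 0 \<longrightarrow> c = c'))"

lemma sparse_sym_tensor_swap: "sparse_sym_tensor t \<Longrightarrow> t a b c = t b a c" "sparse_sym_tensor t \<Longrightarrow> t a b c = t a c b"
  "sparse_sym_tensor t \<Longrightarrow> t a b c = t c b a"
  unfolding sparse_sym_tensor_def by metis+

lemma sparse_sum_mult_sq_le:
  fixes f v :: "nat \<Rightarrow> real"
  assumes A: "finite A" and u: "\<And>c c'. f c \<noteq> 0 \<Longrightarrow> f c' \<noteq> 0 \<Longrightarrow> c = c'"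
    and b: "\<And>c. \<bar>f c\<bar> \<le> 1"
  shows "(\<Sum>c\<in>A. f c * v c)^2 \<le> (\<Sum>c\<in>A. \<bar>f c\<bar> * (v c)^2)"
    and "(\<Sum>c\<in>A. \<bar>f c\<bar>) \<le> 1"
proof -
  have "(\<Sum>c\<in>A. f c * v c)^2 \<le> (\<Sum>c\<in>A. \<bar>f c\<bar> * (v c)^2) \<and> (\<Sum>c\<in>A. \<bar>f c\<bar>) \<le> 1"
  proof (cases "\<exists>c0\<in>A. f c0 \<noteq> 0")
    case True
    then obtain c0 where c0: "c0 \<in> A" "f c0 \<noteq> 0" by blast
    have z: "\<And>c. c \<in> A - {c0} \<Longrightarrow> f c = 0" using u c0 by blast
    have s1: "(\<Sum>c\<in>A. f c * v c) = f c0 * v c0"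
      using A c0 z by (subst sum.remove[of _ c0]) auto
    have s2: "(\<Sum>c\<in>A. \<bar>f c\<bar>) = \<bar>f c0\<bar>"
      using A c0 z by (subst sum.remove[of _ c0]) auto
    have "(f c0 * v c0)^2 = (f c0)^2 * (v c0)^2" by (simp add: power_mult_distrib)
    also have "\<dots> \<le> \<bar>f c0\<bar> * (v c0)^2"
    proof (intro mult_right_mono)
      have "(f c0)^2 = \<bar>f c0\<bar> * \<bar>f c0\<bar>" by (simp add: power2_eq_square abs_mult_self_eq)
      also have "\<dots> \<le> \<bar>f c0\<bar> * 1" using b[of c0] by (intro mult_left_mono) auto
      finally show "(f c0)^2 \<le> \<bar>f c0\<bar>" by simp
    qed simp
    also have "\<dots> \<le> (\<Sum>c\<in>A. \<bar>f c\<bar> * (v c)^2)"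
      using A c0 by (intro member_le_sum) auto
    finally show ?thesis using s1 s2 b[of c0] by simp
  next
    case False
    hence "\<And>c. c \<in> A \<Longrightarrow> f c = 0" by blast
    thus ?thesis by (simp add: sum_nonneg)
  qed
  thus "(\<Sum>c\<in>A. f c * v c)^2 \<le> (\<Sum>c\<in>A. \<bar>f c\<bar> * (v c)^2)" "(\<Sum>c\<in>A. \<bar>f c\<bar>) \<le> 1" by auto
qed

text \<open>Schur test: by sparsity each row of the slice t(\<cdot>,i,\<cdot>) has at most one nonzero entry, and by
  symmetry so does each column.\<close>

lemma sparse_sym_tensor_sum_sq_le:
  fixes v :: "nat \<Rightarrow> real"
  assumes t: "sparse_sym_tensor t"
  shows "(\<Sum>a<n. (\<Sum>c<n. t a i c * v c)^2) \<le> (\<Sum>c<n. (v c)^2)"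
proof -
  have u: "\<And>a c c'. t a i c \<noteq> 0 \<Longrightarrow> t a i c' \<noteq> 0 \<Longrightarrow> c = c'" using t unfolding sparse_sym_tensor_def by blast
  have b: "\<And>a c. \<bar>t a i c\<bar> \<le> 1" using t unfolding sparse_sym_tensor_def by blast
  have "(\<Sum>a<n. (\<Sum>c<n. t a i c * v c)^2) \<le> (\<Sum>a<n. (\<Sum>c<n. \<bar>t a i c\<bar> * (v c)^2))"
    by (intro sum_mono sparse_sum_mult_sq_le(1) u b) auto
  also have "\<dots> = (\<Sum>c<n. (v c)^2 * (\<Sum>a<n. \<bar>t c i a\<bar>))"
    by (subst sum.swap) (simp add: sum_distrib_left sparse_sym_tensor_swap(3)[OF t, of _ i] mult.commute)
  also have "\<dots> \<le> (\<Sum>c<n. (v c)^2 * 1)"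
    by (intro sum_mono mult_left_mono sparse_sum_mult_sq_le(2) u b) auto
  finally show ?thesis by simp
qed

text \<open>Coordinates 0, 1..n, n+1..2n and 2n+1 of R^(2n+2) are the four summands of R \<oplus> R^n \<oplus> R^n \<oplus> R.\<close>

definition graded_entry :: "nat \<Rightarrow> (nat \<Rightarrow> nat \<Rightarrow> nat \<Rightarrow> real) \<Rightarrow> nat \<Rightarrow> nat \<Rightarrow> nat \<Rightarrow> real" where
  "graded_entry n t i r s = (case s of 0 \<Rightarrow> (if r = Suc i then 1 else 0)
     | Suc c \<Rightarrow> if c < n then (if n < r \<and> r \<le> 2*n then t (r - Suc n) i c else 0)
     else if r = 2*n+1 \<and> s = Suc n + i then 1 else 0)"

definition graded_mat :: "nat \<Rightarrow> (nat \<Rightarrow> nat \<Rightarrow> nat \<Rightarrow> real) \<Rightarrow> nat \<Rightarrow> real mat" where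
  "graded_mat n t i = mat (2*n+2) (2*n+2) (\<lambda>(r,s). graded_entry n t i r s)"

definition graded_apply :: "nat \<Rightarrow> (nat \<Rightarrow> nat \<Rightarrow> nat \<Rightarrow> real) \<Rightarrow> nat \<Rightarrow> real vec \<Rightarrow> real vec" where
  "graded_apply n t i u = vec (2*n+2) (\<lambda>r. (if r = Suc i then u$0 else 0)
      + (if n < r \<and> r \<le> 2*n then (\<Sum>c<n. t (r - Suc n) i c * u$(Suc c)) else 0)
      + (if r = 2*n+1 then u$(Suc n + i) else 0))"

lemma graded_mat_carrier[simp]: "graded_mat n t i \<in> carrier_mat (2*n+2) (2*n+2)"
  "graded_mat n t i \<in> carrier_mat (Suc (Suc (2*n))) (Suc (Suc (2*n)))"
  "dim_row (graded_mat n t i) = Suc (Suc (2*n))" "dim_col (graded_mat n t i) = Suc (Suc (2*n))"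
  by (simp_all add: graded_mat_def)

lemma graded_mat_mult_vec:
  assumes i: "i < n" and u: "u \<in> carrier_vec (2*n+2)"
  shows "graded_mat n t i *\<^sub>v u = graded_apply n t i u"
proof (rule eq_vecI)
  show "dim_vec (graded_mat n t i *\<^sub>v u) = dim_vec (graded_apply n t i u)" by (simp add: graded_mat_def graded_apply_def)
  fix r assume "r < dim_vec (graded_apply n t i u)"
  hence r: "r < 2*n+2" by (simp add: graded_apply_def)
  have du: "dim_vec u = 2*n+2" using u by simp
  have "(graded_mat n t i *\<^sub>v u) $ r = (\<Sum>s<2*n+2. graded_entry n t i r s * u $ s)"
    using r du by (simp add: graded_mat_def scalar_prod_def atLeast0LessThan)
  also have "\<dots> = (if r = Suc i then u$0 else 0)
      + (\<Sum>c<n. (if n < r \<and> r \<le> 2*n then t (r - Suc n) i c else 0) * u$(Suc c))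
      + (\<Sum>c<n. (if r = 2*n+1 \<and> c = i then 1 else 0) * u$(Suc n + c)) + 0"
    unfolding sum_split_levels using i by (simp add: graded_entry_def)
  also have "(\<Sum>c<n. (if r = 2*n+1 \<and> c = i then 1 else 0) * u$(Suc n + c)) = (if r = 2*n+1 then u$(Suc n + i) else 0)"
    using i by (cases "r = 2*n+1") simp_all
  also have "(\<Sum>c<n. (if n < r \<and> r \<le> 2*n then t (r - Suc n) i c else 0) * u$(Suc c))
     = (if n < r \<and> r \<le> 2*n then (\<Sum>c<n. t (r - Suc n) i c * u$(Suc c)) else 0)"
  proof (cases "n < r \<and> r \<le> 2*n")
    case False
    then show ?thesis by (subst if_not_P, assumption)+ simp
  qed simp
  also have "(if r = Suc i then u$0 else 0) + \<dots> + (if r = 2*n+1 then u$(Suc n + i) else 0) + 0 = graded_apply n t i u $ r"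
    using r by (simp add: graded_apply_def)
  finally show "(graded_mat n t i *\<^sub>v u) $ r = graded_apply n t i u $ r" .
qed

lemma graded_apply_carrier[simp]: "graded_apply n t i u \<in> carrier_vec (2*n+2)" "dim_vec (graded_apply n t i u) = 2*n+2"
  "graded_apply n t i u \<in> carrier_vec (Suc (Suc (2*n)))"
  by (simp_all add: graded_apply_def)

lemma graded_apply_nth_0[simp]: "graded_apply n t i u $ 0 = 0"
  by (simp add: graded_apply_def)

lemma graded_apply_nth_level1[simp]: "c < n \<Longrightarrow> graded_apply n t i u $ (Suc c) = (if c = i then u$0 else 0)"
  by (simp add: graded_apply_def)

lemma graded_apply_nth_level2[simp]: "a < n \<Longrightarrow> i < n \<Longrightarrow> graded_apply n t i u $ (Suc (n + a)) = (\<Sum>c<n. t a i c * u$(Suc c))"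
  by (simp add: graded_apply_def)

lemma graded_apply_nth_top[simp]: "i < n \<Longrightarrow> graded_apply n t i u $ (Suc (2*n)) = u$(Suc (n + i))"
  by (simp add: graded_apply_def)

lemma graded_apply_twice:
  assumes i: "i < n" and j: "j < n"
  shows "graded_apply n t i (graded_apply n t j u) = vec (2*n+2) (\<lambda>r.
     (if n < r \<and> r \<le> 2*n then t (r - Suc n) i j * u$0 else 0)
     + (if r = 2*n+1 then (\<Sum>c<n. t i j c * u$(Suc c)) else 0))"
proof (rule eq_vecI)
  fix r assume "r < dim_vec (vec (2*n+2) (\<lambda>r.
     (if n < r \<and> r \<le> 2*n then t (r - Suc n) i j * u$0 else 0)
     + (if r = 2*n+1 then (\<Sum>c<n. t i j c * u$(Suc c)) else 0)))"
  hence r: "r < 2*n+2" by simp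
  have s1: "(\<Sum>c<n. t (r - Suc n) i c * graded_apply n t j u $ Suc c) = t (r - Suc n) i j * u$0"
  proof -
    have "(\<Sum>c<n. t (r - Suc n) i c * graded_apply n t j u $ Suc c) = (\<Sum>c<n. (if c = j then 1 else 0) * (t (r - Suc n) i c * u$0))"
      by (intro sum.cong) auto
    also have "\<dots> = t (r - Suc n) i j * u$0" using j by simp
    finally show ?thesis .
  qed
  have s2: "graded_apply n t j u $ (Suc n + i) = (\<Sum>c<n. t i j c * u$(Suc c))" using i j by simp
  show "graded_apply n t i (graded_apply n t j u) $ r = vec (2*n+2) (\<lambda>r.
     (if n < r \<and> r \<le> 2*n then t (r - Suc n) i j * u$0 else 0)
     + (if r = 2*n+1 then (\<Sum>c<n. t i j c * u$(Suc c)) else 0)) $ r"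
    using r s1 s2 by (simp add: graded_apply_def[of n t i])
qed simp

lemma graded_mat_commute:
  assumes t: "sparse_sym_tensor t" and i: "i < n" and j: "j < n"
  shows "graded_mat n t i * graded_mat n t j = graded_mat n t j * graded_mat n t i"
proof (rule mat_mult_commuteI[of _ "2*n+2"])
  fix u :: "real vec" assume u: "u \<in> carrier_vec (2*n+2)"
  have sym: "\<forall>a. t a i j = t a j i" "\<forall>c. t i j c = t j i c"
    using sparse_sym_tensor_swap(1,2)[OF t] by blast+
  have "graded_apply n t i (graded_apply n t j u) = graded_apply n t j (graded_apply n t i u)"
    by (rule eq_vecI) (use i j in \<open>simp_all add: graded_apply_twice sym\<close>)
  then show "graded_mat n t i *\<^sub>v (graded_mat n t j *\<^sub>v u) = graded_mat n t j *\<^sub>v (graded_mat n t i *\<^sub>v u)"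
    using i j u by (simp add: graded_mat_mult_vec)
qed simp_all

lemma graded_apply_sum_sq_le:
  assumes t: "sparse_sym_tensor t" and i: "i < n" and u: "u \<in> carrier_vec (2*n+2)"
  shows "(\<Sum>r<2*n+2. (graded_apply n t i u $ r)^2) \<le> (\<Sum>r<2*n+2. (u $ r)^2)"
proof -
  have e1: "(\<Sum>r<2*n+2. (graded_apply n t i u $ r)^2) = 0 + (\<Sum>c<n. (if c = i then (u$0)^2 else 0))
      + (\<Sum>a<n. (\<Sum>c<n. t a i c * u$(Suc c))^2) + (u$(Suc (n+i)))^2"
    unfolding sum_split_levels using i by (simp add: if_distrib[of "\<lambda>x. x^2"] cong: if_cong)
  have e2: "(\<Sum>c<n. (if c = i then (u$0)^2 else 0)) = (u$0)^2" using i by simp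
  have e3: "(\<Sum>a<n. (\<Sum>c<n. t a i c * u$(Suc c))^2) \<le> (\<Sum>c<n. (u$(Suc c))^2)"
    by (rule sparse_sym_tensor_sum_sq_le[OF t])
  have "(u$(Suc n + i))^2 \<le> (\<Sum>c<n. (u$(Suc n + c))^2)"
    using i by (intro member_le_sum[where f="\<lambda>c. (u$(Suc n + c))^2"]) auto
  hence e4: "(u$(Suc (n + i)))^2 \<le> (\<Sum>c<n. (u$(Suc n + c))^2)" by simp
  have e5: "(\<Sum>r<2*n+2. (u $ r)^2) = (u$0)^2 + (\<Sum>c<n. (u$(Suc c))^2) + (\<Sum>c<n. (u$(Suc n + c))^2) + (u$(2*n+1))^2"
    by (rule sum_split_levels)
  have "0 \<le> (u$(2*n+1))^2" by simp
  then show ?thesis using e1 e2 e3 e4 e5 by linarith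
qed

definition graded_family :: "nat \<Rightarrow> nat \<Rightarrow> (nat \<Rightarrow> nat \<Rightarrow> nat \<Rightarrow> real) \<Rightarrow> nat \<Rightarrow> real mat" where
  "graded_family n w t i = (if i = w then 1\<^sub>m (2*n+2) else graded_mat n t i)"

lemma graded_family_carrier[simp]: "graded_family n w t i \<in> carrier_mat (2*n+2) (2*n+2)"
  "graded_family n w t i \<in> carrier_mat (Suc (Suc (2*n))) (Suc (Suc (2*n)))"
  by (simp_all add: graded_family_def)

lemma graded_family_mult_vec: "i < n \<Longrightarrow> u \<in> carrier_vec (2*n+2) \<Longrightarrow>
   graded_family n w t i *\<^sub>v u = (if i = w then u else graded_apply n t i u)"
  by (simp add: graded_family_def graded_mat_mult_vec)

lemma graded_family_commute:
  assumes t: "sparse_sym_tensor t" and i: "i < n" and j: "j < n"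
  shows "graded_family n w t i * graded_family n w t j = graded_family n w t j * graded_family n w t i"
  using graded_mat_commute[OF t i j] by (simp add: graded_family_def)

lemma graded_family_op_norm_le:
  assumes t: "sparse_sym_tensor t" and i: "i < n"
  shows "mat_op_norm (graded_family n w t i) \<le> 1"
proof (rule mat_op_norm_le_oneI)
  fix v :: "real vec" assume "v \<in> carrier_vec (dim_col (graded_family n w t i))"
  hence v: "v \<in> carrier_vec (2*n+2)" by (cases "i = w") (simp_all add: graded_family_def graded_mat_def)
  show "eucl_vnorm (graded_family n w t i *\<^sub>v v) \<le> eucl_vnorm v"
  proof (cases "i = w")
    case True thus ?thesis using v by (simp add: graded_family_def)
  next
    case False
    hence "graded_family n w t i *\<^sub>v v = graded_apply n t i v" using i v by (simp add: graded_family_mult_vec)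
    moreover have "dim_vec v = 2*n+2" using v by simp
    ultimately show ?thesis unfolding eucl_vnorm_def
      using graded_apply_sum_sq_le[OF t i v] by (simp add: real_sqrt_le_mono)
  qed
qed

definition level0 :: "nat \<Rightarrow> real \<Rightarrow> real vec" where "level0 n c = vec (2*n+2) (\<lambda>r. if r = 0 then c else 0)"

definition level1 :: "nat \<Rightarrow> (nat \<Rightarrow> real) \<Rightarrow> real vec" where
  "level1 n f = vec (2*n+2) (\<lambda>r. if r \<noteq> 0 \<and> r \<le> n then f (r - 1) else 0)"

definition level2 :: "nat \<Rightarrow> (nat \<Rightarrow> real) \<Rightarrow> real vec" where
  "level2 n g = vec (2*n+2) (\<lambda>r. if n < r \<and> r \<le> 2*n then g (r - Suc n) else 0)"

definition level3 :: "nat \<Rightarrow> real \<Rightarrow> real vec" where "level3 n c = vec (2*n+2) (\<lambda>r. if r = 2*n+1 then c else 0)"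

lemma level_carrier[simp]: "level0 n c \<in> carrier_vec (2*n+2)" "level1 n f \<in> carrier_vec (2*n+2)"
  "level2 n g \<in> carrier_vec (2*n+2)" "level3 n c \<in> carrier_vec (2*n+2)"
  "level0 n c \<in> carrier_vec (Suc (Suc (2*n)))" "level1 n f \<in> carrier_vec (Suc (Suc (2*n)))"
  "level2 n g \<in> carrier_vec (Suc (Suc (2*n)))" "level3 n c \<in> carrier_vec (Suc (Suc (2*n)))"
  by (simp_all add: level0_def level1_def level2_def level3_def)

lemma level_nth_top[simp]: "level0 n c $ (2*n+1) = 0" "level1 n f $ (2*n+1) = 0" "level2 n g $ (2*n+1) = 0" "level3 n c $ (2*n+1) = c"
  "level0 n c $ Suc (2*n) = 0" "level1 n f $ Suc (2*n) = 0" "level2 n g $ Suc (2*n) = 0" "level3 n c $ Suc (2*n) = c"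
  by (simp_all add: level0_def level1_def level2_def level3_def)

lemma unit_vec_0_eq_level0: "unit_vec (2*n+2) 0 = level0 n 1"
  by (auto simp: level0_def unit_vec_def)

lemma graded_apply_level0: "i < n \<Longrightarrow> graded_apply n t i (level0 n c) = level1 n (\<lambda>m. if m = i then c else 0)"
  by (rule eq_vecI) (auto simp: graded_apply_def level0_def level1_def)

lemma graded_apply_level1: "i < n \<Longrightarrow> graded_apply n t i (level1 n f) = level2 n (\<lambda>a. \<Sum>c<n. t a i c * f c)"
  by (rule eq_vecI) (auto simp: graded_apply_def level1_def level2_def intro!: sum.cong)

lemma graded_apply_level2: "i < n \<Longrightarrow> graded_apply n t i (level2 n g) = level3 n (g i)"
  by (rule eq_vecI) (auto simp: graded_apply_def level2_def level3_def)

lemma graded_apply_level3: "i < n \<Longrightarrow> graded_apply n t i (level3 n c) = level0 n 0"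
  by (rule eq_vecI) (auto simp: graded_apply_def level3_def level0_def)

lemma graded_family_level_vecs:
  assumes "i < n"
  shows "graded_family n w t i *\<^sub>v level0 n c = (if i = w then level0 n c else level1 n (\<lambda>m. if m = i then c else 0))"
    "graded_family n w t i *\<^sub>v level1 n f = (if i = w then level1 n f else level2 n (\<lambda>a. \<Sum>c<n. t a i c * f c))"
    "graded_family n w t i *\<^sub>v level2 n g = (if i = w then level2 n g else level3 n (g i))"
    "graded_family n w t i *\<^sub>v level3 n c = (if i = w then level3 n c else level0 n 0)"
  using assms by (simp_all add: graded_family_mult_vec[of i n] graded_apply_level0 graded_apply_level1 graded_apply_level2 graded_apply_level3)

lemma graded_family_word_corner:
  assumes t: "sparse_sym_tensor t" and tw: "\<And>b c. t w b c = 0"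
    and i: "i < n" and j: "j < n" and k: "k < n" and l: "l < n"
  shows "(graded_family n w t i * graded_family n w t j * graded_family n w t k * graded_family n w t l)
      $$ (2*n+1, 0)
    = (if i = w then t j k l else 0) + (if j = w then t i k l else 0)
      + (if k = w then t i j l else 0) + (if l = w then t i j k else 0)"
proof -
  have tw2: "t a w c = 0" for a c using tw sparse_sym_tensor_swap(1)[OF t, of a w c] by simp
  have tw3: "t a b w = 0" for a b using tw sparse_sym_tensor_swap(3)[OF t, of a b w] by simp
  have "(graded_family n w t i * graded_family n w t j * graded_family n w t k * graded_family n w t l)
      $$ (2*n+1, 0) = (graded_family n w t i *\<^sub>v (graded_family n w t j *\<^sub>v (graded_family n w t k *\<^sub>v
      (graded_family n w t l *\<^sub>v level0 n 1)))) $ (2*n+1)"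
    unfolding unit_vec_0_eq_level0[symmetric] by (rule mat_mult4_entry) simp_all
  also have "\<dots> = (if i = w then t j k l else 0) + (if j = w then t i k l else 0)
      + (if k = w then t i j l else 0) + (if l = w then t i j k else 0)"
    using i j k l
    by (cases "i = w"; cases "j = w"; cases "k = w"; cases "l = w")
       (simp_all add: graded_family_level_vecs tw tw2 tw3)
  finally show ?thesis .
qed

lemma sum4_delta1:
  fixes F :: "nat \<Rightarrow> nat \<Rightarrow> nat \<Rightarrow> nat \<Rightarrow> real"
  assumes w: "w < n"
  shows "(\<Sum>i<n. \<Sum>j<n. \<Sum>k<n. \<Sum>l<n. F i j k l * (if i = w then H j k l else 0))
       = (\<Sum>j<n. \<Sum>k<n. \<Sum>l<n. F w j k l * H j k l)"
proof -
  have "(\<Sum>j<n. \<Sum>k<n. \<Sum>l<n. F i j k l * (if i = w then H j k l else 0))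
      = (if i = w then (\<Sum>j<n. \<Sum>k<n. \<Sum>l<n. F w j k l * H j k l) else 0)" for i
    by (cases "i = w") simp_all
  thus ?thesis using w by simp
qed

lemma sum4_delta2:
  fixes F :: "nat \<Rightarrow> nat \<Rightarrow> nat \<Rightarrow> nat \<Rightarrow> real"
  assumes w: "w < n"
  shows "(\<Sum>i<n. \<Sum>j<n. \<Sum>k<n. \<Sum>l<n. F i j k l * (if j = w then H i k l else 0))
       = (\<Sum>i<n. \<Sum>k<n. \<Sum>l<n. F i w k l * H i k l)"
proof -
  have "(\<Sum>k<n. \<Sum>l<n. F i j k l * (if j = w then H i k l else 0))
      = (if j = w then (\<Sum>k<n. \<Sum>l<n. F i w k l * H i k l) else 0)" for i j
    by (cases "j = w") simp_all
  thus ?thesis using w by simp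
qed

lemma sum4_delta3:
  fixes F :: "nat \<Rightarrow> nat \<Rightarrow> nat \<Rightarrow> nat \<Rightarrow> real"
  assumes w: "w < n"
  shows "(\<Sum>i<n. \<Sum>j<n. \<Sum>k<n. \<Sum>l<n. F i j k l * (if k = w then H i j l else 0))
       = (\<Sum>i<n. \<Sum>j<n. \<Sum>l<n. F i j w l * H i j l)"
proof -
  have "(\<Sum>l<n. F i j k l * (if k = w then H i j l else 0))
      = (if k = w then (\<Sum>l<n. F i j w l * H i j l) else 0)" for i j k
    by (cases "k = w") simp_all
  thus ?thesis using w by simp
qed

lemma sum4_delta4:
  fixes F :: "nat \<Rightarrow> nat \<Rightarrow> nat \<Rightarrow> nat \<Rightarrow> real"
  assumes w: "w < n"
  shows "(\<Sum>i<n. \<Sum>j<n. \<Sum>k<n. \<Sum>l<n. F i j k l * (if l = w then H i j k else 0))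
       = (\<Sum>i<n. \<Sum>j<n. \<Sum>k<n. F i j k w * H i j k)"
proof -
  have "(\<Sum>l<n. F i j k l * (if l = w then H i j k else 0)) = F i j k w * H i j k" for i j k
    using w by simp
  thus ?thesis by simp
qed

lemma tensor_eval_graded_family_corner:
  fixes T :: "nat \<Rightarrow> nat \<Rightarrow> nat \<Rightarrow> nat \<Rightarrow> real"
  assumes t: "sparse_sym_tensor t" and tw: "\<And>b c. t w b c = 0" and w: "w < n"
    and T: "\<And>i j k l i' j' k' l'. mset [i, j, k, l] = mset [i', j', k', l'] \<Longrightarrow> T i j k l = T i' j' k' l'"
  shows "(\<Sum>i<n. \<Sum>j<n. \<Sum>k<n. \<Sum>l<n. T i j k l *
      ((graded_family n w t i * graded_family n w t j * graded_family n w t k * graded_family n w t l) $$ (2*n+1, 0)))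
    = 4 * (\<Sum>j<n. \<Sum>k<n. \<Sum>l<n. T w j k l * t j k l)"
proof -
  let ?A = "graded_family n w t"
  have corner: "(?A i * ?A j * ?A k * ?A l) $$ (2*n+1, 0) = (if i = w then t j k l else 0)
      + (if j = w then t i k l else 0) + (if k = w then t i j l else 0) + (if l = w then t i j k else 0)"
    if "i < n" "j < n" "k < n" "l < n" for i j k l
    using graded_family_word_corner[OF t tw that] .
  have "(\<Sum>i<n. \<Sum>j<n. \<Sum>k<n. \<Sum>l<n. T i j k l * ((?A i * ?A j * ?A k * ?A l) $$ (2*n+1, 0)))
      = (\<Sum>i<n. \<Sum>j<n. \<Sum>k<n. \<Sum>l<n. T i j k l * (if i = w then t j k l else 0)
        + T i j k l * (if j = w then t i k l else 0) + T i j k l * (if k = w then t i j l else 0)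
        + T i j k l * (if l = w then t i j k else 0))"
    by (intro sum.cong refl) (simp only: corner lessThan_iff distrib_left)
  also have "\<dots> = (\<Sum>i<n. \<Sum>j<n. \<Sum>k<n. \<Sum>l<n. T i j k l * (if i = w then t j k l else 0))
      + (\<Sum>i<n. \<Sum>j<n. \<Sum>k<n. \<Sum>l<n. T i j k l * (if j = w then t i k l else 0))
      + (\<Sum>i<n. \<Sum>j<n. \<Sum>k<n. \<Sum>l<n. T i j k l * (if k = w then t i j l else 0))
      + (\<Sum>i<n. \<Sum>j<n. \<Sum>k<n. \<Sum>l<n. T i j k l * (if l = w then t i j k else 0))"
    by (simp only: sum.distrib)
  also have "\<dots> = 4 * (\<Sum>j<n. \<Sum>k<n. \<Sum>l<n. T w j k l * t j k l)"
  proof -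
    have "T i w k l = T w i k l" "T i j w l = T w i j l" "T i j k w = T w i j k" for i j k l
      by (rule T, simp add: add_mset_commute)+
    then show ?thesis
      unfolding sum4_delta1[OF w] sum4_delta2[OF w] sum4_delta3[OF w] sum4_delta4[OF w] by simp
  qed
  finally show ?thesis .
qed


section \<open>Triples pairwise meeting in at most one point\<close>

definition triple :: "nat \<Rightarrow> nat \<times> nat \<Rightarrow> nat set" where
  "triple p e = {fst e, p + snd e, 2*p + fst e + snd e}"

definition triple_tensor :: "nat \<Rightarrow> (nat \<times> nat \<Rightarrow> real) \<Rightarrow> nat \<Rightarrow> nat \<Rightarrow> nat \<Rightarrow> real" where
  "triple_tensor p \<sigma> i j k = (\<Sum>e\<in>{..<p}\<times>{..<p}. if {i,j,k} = triple p e then \<sigma> e else 0)"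

lemma triple_eq_if_two_common:
  assumes e: "e \<in> {..<p}\<times>{..<p}" and e': "e' \<in> {..<p}\<times>{..<p}"
    and xy: "x \<noteq> y" "x \<in> triple p e" "y \<in> triple p e" "x \<in> triple p e'" "y \<in> triple p e'"
  shows "e = e'"
proof -
  obtain a b a' b' where "e = (a, b)" "e' = (a', b')" by fastforce
  then show ?thesis using assms unfolding triple_def by auto
qed


lemma triple_distinct:
  assumes e: "e \<in> {..<p}\<times>{..<p}" and eq: "{i,j,k} = triple p e"
  shows "i \<noteq> j" "i \<noteq> k" "j \<noteq> k"
proof -
  obtain a b where ab: "e = (a,b)" "a < p" "b < p" using e by auto
  have m: "a \<in> {i,j,k}" "p + b \<in> {i,j,k}" "2*p+a+b \<in> {i,j,k}" using eq ab unfolding triple_def by auto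
  have d: "a \<noteq> p + b" "a \<noteq> 2*p+a+b" "p + b \<noteq> 2*p+a+b" using ab by auto
  show "i \<noteq> j" using m d by auto
  show "i \<noteq> k" using m d by auto
  show "j \<noteq> k" using m d by auto
qed

lemma triple_tensor_triple:
  assumes e: "e \<in> {..<p}\<times>{..<p}" and eq: "{i,j,k} = triple p e"
  shows "triple_tensor p \<sigma> i j k = \<sigma> e"
proof -
  have "triple_tensor p \<sigma> i j k = (\<Sum>e'\<in>{..<p}\<times>{..<p}. if e' = e then \<sigma> e' else 0)"
    unfolding triple_tensor_def
  proof (intro sum.cong refl)
    fix e' assume e': "e' \<in> {..<p}\<times>{..<p}"
    have "{i,j,k} = triple p e' \<longleftrightarrow> e' = e"
    proof
      assume h: "{i,j,k} = triple p e'"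
      have "i \<noteq> j" using triple_distinct[OF e eq] by auto
      moreover have "i \<in> triple p e" "j \<in> triple p e" "i \<in> triple p e'" "j \<in> triple p e'" using eq h by auto
      ultimately show "e' = e" using triple_eq_if_two_common[OF e e'] by metis
    qed (use eq in auto)
    thus "(if {i,j,k} = triple p e' then \<sigma> e' else 0) = (if e' = e then \<sigma> e' else 0)" by simp
  qed
  also have "\<dots> = \<sigma> e" using e by simp
  finally show ?thesis .
qed

lemma triple_tensor_eq_0:
  assumes "\<not> (\<exists>e\<in>{..<p}\<times>{..<p}. {i,j,k} = triple p e)"
  shows "triple_tensor p \<sigma> i j k = 0"
  unfolding triple_tensor_def using assms by (intro sum.neutral) auto

lemma triple_tensor_neq_0: "triple_tensor p \<sigma> i j k \<noteq> 0 \<Longrightarrow> \<exists>e\<in>{..<p}\<times>{..<p}. {i,j,k} = triple p e"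
  using triple_tensor_eq_0 by blast

lemma sparse_sym_tensor_triple_tensor:
  assumes \<sigma>: "\<And>e. e \<in> {..<p}\<times>{..<p} \<Longrightarrow> \<sigma> e \<in> {-1,1}"
  shows "sparse_sym_tensor (triple_tensor p \<sigma>)"
  unfolding sparse_sym_tensor_def
proof (intro conjI allI impI)
  fix a b c
  show "triple_tensor p \<sigma> a b c = triple_tensor p \<sigma> b a c" unfolding triple_tensor_def by (simp add: insert_commute)
  show "triple_tensor p \<sigma> a b c = triple_tensor p \<sigma> a c b" unfolding triple_tensor_def by (simp add: insert_commute)
  show "\<bar>triple_tensor p \<sigma> a b c\<bar> \<le> 1"
  proof (cases "\<exists>e\<in>{..<p}\<times>{..<p}. {a,b,c} = triple p e")
    case True
    then obtain e where "e\<in>{..<p}\<times>{..<p}" "{a,b,c} = triple p e" by blast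
    thus ?thesis using triple_tensor_triple[of e p a b c \<sigma>] \<sigma>[of e] by auto
  qed (simp add: triple_tensor_eq_0)
next
  fix a i c c' assume h: "triple_tensor p \<sigma> a i c \<noteq> 0" "triple_tensor p \<sigma> a i c' \<noteq> 0"
  obtain e where e: "e\<in>{..<p}\<times>{..<p}" "{a,i,c} = triple p e" using triple_tensor_neq_0[OF h(1)] by blast
  obtain e' where e': "e'\<in>{..<p}\<times>{..<p}" "{a,i,c'} = triple p e'" using triple_tensor_neq_0[OF h(2)] by blast
  have d: "a \<noteq> i" "a \<noteq> c" "i \<noteq> c" using triple_distinct[OF e] by auto
  have "e = e'" using triple_eq_if_two_common[OF e(1) e'(1) d(1)] e(2) e'(2) by auto
  hence "{a,i,c} = {a,i,c'}" using e e' by simp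
  thus "c = c'" using d by auto
qed

lemma triple_tensor_last_var:
  assumes p: "1 \<le> p"
  shows "triple_tensor p \<sigma> (4*p-1) b c = 0"
proof (rule triple_tensor_eq_0)
  show "\<not> (\<exists>e\<in>{..<p}\<times>{..<p}. {4*p-1,b,c} = triple p e)"
  proof
    assume "\<exists>e\<in>{..<p}\<times>{..<p}. {4*p-1,b,c} = triple p e"
    then obtain a b' where "a < p" "b' < p" "4*p-1 \<in> triple p (a,b')" by auto
    thus False unfolding triple_def by auto
  qed
qed

section \<open>The quartic form and its tensor\<close>

lemma prod_pow_count_mset:
  fixes x :: "nat \<Rightarrow> real"
  shows "set xs \<subseteq> {..<n} \<Longrightarrow> (\<Prod>m<n. x m ^ count (mset xs) m) = prod_list (map x xs)"
proof (induction xs)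
  case Nil thus ?case by simp
next
  case (Cons a xs)
  have a: "a < n" using Cons.prems by auto
  have "(\<Prod>m<n. x m ^ count (mset (a # xs)) m) = (\<Prod>m<n. x m ^ count (mset xs) m * (if m = a then x m else 1))"
    by (intro prod.cong refl) auto
  also have "\<dots> = (\<Prod>m<n. x m ^ count (mset xs) m) * (\<Prod>m<n. (if m = a then x m else 1))"
    by (rule prod.distrib)
  also have "(\<Prod>m<n. (if m = a then x m else 1)) = x a" using a by simp
  finally show ?case using Cons by (simp add: mult.commute)
qed

lemma tau4_distinct:
  assumes "distinct [i,j,k,l]"
  shows "tau4 i j k l = 24"
proof -
  have "{xs. mset xs = mset [i,j,k,l]} = permutations_of_set {i,j,k,l}"
    using assms by (simp add: permutations_of_set_altdef permutations_of_multiset_def mset_set_set[symmetric, of "[i,j,k,l]"])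
  moreover have "card {i,j,k,l} = 4" using assms by simp
  ultimately show ?thesis unfolding tau4_def by (simp add: fact_numeral)
qed

lemma Tq_mset_eq:
  "mset [i,j,k,l] = mset [i',j',k',l'] \<Longrightarrow> Tq d i j k l = Tq d i' j' k' l'"
  unfolding Tq_def tau4_def by simp

definition quartic_vars :: "nat \<Rightarrow> nat \<times> nat \<Rightarrow> nat list" where
  "quartic_vars p e = [4*p-1, fst e, p + snd e, 2*p + fst e + snd e]"

definition quartic_coeffs :: "nat \<Rightarrow> (nat \<times> nat \<Rightarrow> real) \<Rightarrow> real \<Rightarrow> (nat \<Rightarrow> nat) \<Rightarrow> real" where
  "quartic_coeffs p \<sigma> s \<alpha> = (\<Sum>e\<in>{..<p}\<times>{..<p}. if \<alpha> = count (mset (quartic_vars p e)) then \<sigma> e / s else 0)"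

lemma quartic_vars_props:
  assumes e: "e \<in> {..<p}\<times>{..<p}"
  shows "distinct (quartic_vars p e)" "set (quartic_vars p e) = insert (4*p-1) (triple p e)" "4*p-1 \<notin> triple p e"
proof -
  obtain a b where ab: "e = (a,b)" "a < p" "b < p" using e by auto
  show "distinct (quartic_vars p e)" "set (quartic_vars p e) = insert (4*p-1) (triple p e)" "4*p-1 \<notin> triple p e"
    using ab by (auto simp: quartic_vars_def triple_def)
qed

lemma quartic_vars_subset:
  assumes e: "e \<in> {..<p}\<times>{..<p}" and n: "4*p \<le> n"
  shows "set (quartic_vars p e) \<subseteq> {..<n}"
proof -
  obtain a b where ab: "e = (a,b)" "a < p" "b < p" using e by auto
  show ?thesis using ab n by (auto simp: quartic_vars_def)
qed

lemma count_quartic_vars_in_exps: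
  assumes e: "e \<in> {..<p}\<times>{..<p}" and n: "4*p \<le> n"
  shows "count (mset (quartic_vars p e)) \<in> ml_quartic_exps n"
proof -
  have d: "distinct (quartic_vars p e)" using quartic_vars_props[OF e] by simp
  have sub: "set (quartic_vars p e) \<subseteq> {..<n}" by (rule quartic_vars_subset[OF e n])
  have c: "count (mset (quartic_vars p e)) m = (if m \<in> set (quartic_vars p e) then 1 else 0)" for m
    using d distinct_count_atmost_1 by metis
  have "(\<Sum>m<n. count (mset (quartic_vars p e)) m) = (\<Sum>m<n. if m \<in> set (quartic_vars p e) then 1 else 0)"
    using c by simp
  also have "\<dots> = card ({..<n} \<inter> set (quartic_vars p e))"
    by (simp add: sum.inter_restrict[symmetric])
  also have "{..<n} \<inter> set (quartic_vars p e) = set (quartic_vars p e)" using sub by blast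
  also have "card (set (quartic_vars p e)) = 4" using d by (simp add: distinct_card quartic_vars_def)
  finally have s4: "(\<Sum>m<n. count (mset (quartic_vars p e)) m) = 4" .
  show ?thesis unfolding ml_quartic_exps_def using c sub s4 by auto
qed

lemma count_quartic_vars_inj:
  assumes e: "e \<in> {..<p}\<times>{..<p}" and e': "e' \<in> {..<p}\<times>{..<p}"
    and eq: "count (mset (quartic_vars p e)) = count (mset (quartic_vars p e'))"
  shows "e = e'"
proof -
  have "mset (quartic_vars p e) = mset (quartic_vars p e')" using eq by (simp add: multiset_eqI)
  hence "set (quartic_vars p e) = set (quartic_vars p e')" by (metis set_mset_mset)
  hence "insert (4*p-1) (triple p e) = insert (4*p-1) (triple p e')" using quartic_vars_props[OF e] quartic_vars_props[OF e'] by simp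
  hence same_triple: "triple p e = triple p e'" using quartic_vars_props(3)[OF e] quartic_vars_props(3)[OF e'] insert_ident by metis
  obtain a b where ab: "e = (a,b)" "a < p" "b < p" using e by auto
  have "a \<noteq> p + b" "a \<in> triple p e" "p + b \<in> triple p e" using ab by (auto simp: triple_def)
  thus ?thesis using triple_eq_if_two_common[OF e e'] same_triple by metis
qed

lemma quartic_coeffs_count:
  assumes e: "e \<in> {..<p}\<times>{..<p}"
  shows "quartic_coeffs p \<sigma> s (count (mset (quartic_vars p e))) = \<sigma> e / s"
proof -
  have "quartic_coeffs p \<sigma> s (count (mset (quartic_vars p e))) = (\<Sum>e'\<in>{..<p}\<times>{..<p}. if e' = e then \<sigma> e' / s else 0)"
    unfolding quartic_coeffs_def
    by (intro sum.cong refl) (use count_quartic_vars_inj[OF e] in auto)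
  also have "\<dots> = \<sigma> e / s" using e by simp
  finally show ?thesis .
qed

lemma quartic_coeffs_outside:
  assumes n: "4*p \<le> n" and a: "\<alpha> \<notin> ml_quartic_exps n"
  shows "quartic_coeffs p \<sigma> s \<alpha> = 0"
  unfolding quartic_coeffs_def using count_quartic_vars_in_exps[OF _ n] a by (intro sum.neutral) auto

lemma finite_ml_quartic_exps: "finite (ml_quartic_exps n)"
proof (rule finite_subset)
  show "ml_quartic_exps n \<subseteq> {f. \<forall>x. (x \<in> {..<n} \<longrightarrow> f x \<in> {0,1}) \<and> (x \<notin> {..<n} \<longrightarrow> f x = 0)}"
    unfolding ml_quartic_exps_def by (auto simp: le_Suc_eq)
  show "finite {f. \<forall>x. (x \<in> {..<n} \<longrightarrow> f x \<in> {0::nat,1}) \<and> (x \<notin> {..<n} \<longrightarrow> f x = 0)}"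
    by (rule finite_set_of_finite_funs) auto
qed

lemma qform_quartic_coeffs:
  assumes n: "4*p \<le> n"
  shows "qform n (quartic_coeffs p \<sigma> s) x = (\<Sum>e\<in>{..<p}\<times>{..<p}. \<sigma> e / s * prod_list (map x (quartic_vars p e)))"
proof -
  let ?I = "{..<p}\<times>{..<p}"
  let ?P = "\<lambda>\<alpha>. (\<Prod>m<n. x m ^ \<alpha> m)"
  have "qform n (quartic_coeffs p \<sigma> s) x = (\<Sum>\<alpha>\<in>ml_quartic_exps n. \<Sum>e\<in>?I. (if \<alpha> = count (mset (quartic_vars p e)) then \<sigma> e / s * ?P \<alpha> else 0))"
    unfolding qform_def quartic_coeffs_def by (simp add: sum_distrib_right if_distrib[of "\<lambda>y. y * _"] cong: if_cong)
  also have "\<dots> = (\<Sum>e\<in>?I. \<Sum>\<alpha>\<in>ml_quartic_exps n. (if \<alpha> = count (mset (quartic_vars p e)) then \<sigma> e / s * ?P \<alpha> else 0))"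
    by (rule sum.swap)
  also have "\<dots> = (\<Sum>e\<in>?I. \<sigma> e / s * ?P (count (mset (quartic_vars p e))))"
    using count_quartic_vars_in_exps[OF _ n] finite_ml_quartic_exps by (intro sum.cong refl) (simp add: sum.delta)
  also have "\<dots> = (\<Sum>e\<in>?I. \<sigma> e / s * prod_list (map x (quartic_vars p e)))"
    using quartic_vars_subset[OF _ n] by (intro sum.cong refl) (simp add: prod_pow_count_mset)
  finally show ?thesis .
qed

definition triple_form :: "nat \<Rightarrow> (nat \<times> nat \<Rightarrow> real) \<Rightarrow> (nat \<Rightarrow> real) \<Rightarrow> real" where
  "triple_form p \<sigma> x = (\<Sum>e\<in>{..<p}\<times>{..<p}. \<sigma> e * (x (fst e) * x (p + snd e) * x (2*p + fst e + snd e)))"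

lemma qform_quartic_coeffs_eq_triple_form:
  assumes n: "4*p \<le> n"
  shows "qform n (quartic_coeffs p \<sigma> s) x = x (4*p-1) / s * triple_form p \<sigma> x"
  unfolding qform_quartic_coeffs[OF n] triple_form_def sum_distrib_left
  by (intro sum.cong refl) (simp add: quartic_vars_def)

lemma abs_qform_quartic_coeffs_le_1:
  assumes n: "4*p \<le> n" and p: "1 \<le> p" and s: "0 < s"
    and x: "\<forall>m<n. x m = 1 \<or> x m = -1"
    and bound: "\<forall>y. (\<forall>m<4*p. y m \<in> {-1,1}) \<longrightarrow> \<bar>triple_form p \<sigma> y\<bar> \<le> s"
  shows "\<bar>qform n (quartic_coeffs p \<sigma> s) x\<bar> \<le> 1"
proof -
  have "x m \<in> {-1,1}" if "m < 4*p" for m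
  proof -
    have "m < n" using that n by linarith
    then show ?thesis using x by auto
  qed
  then have bound_x: "\<bar>triple_form p \<sigma> x\<bar> \<le> s" using bound by blast
  have "4*p-1 < n" using n p by linarith
  then have "\<bar>x (4*p-1)\<bar> = 1" using x by auto
  then have "\<bar>qform n (quartic_coeffs p \<sigma> s) x\<bar> = \<bar>triple_form p \<sigma> x\<bar> / s"
    using s by (simp add: qform_quartic_coeffs_eq_triple_form[OF n] abs_mult)
  also have "\<dots> \<le> 1" using s bound_x by simp
  finally show ?thesis .
qed

lemma Tq_quartic_coeffs:
  assumes e: "e \<in> {..<p}\<times>{..<p}"
  shows "Tq (quartic_coeffs p \<sigma> s) (4*p-1) (fst e) (p + snd e) (2*p + fst e + snd e) = \<sigma> e / s / 24"
proof -
  have d: "distinct [4*p-1, fst e, p + snd e, 2*p + fst e + snd e]" using quartic_vars_props(1)[OF e] by (simp add: quartic_vars_def)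
  show ?thesis unfolding Tq_def using tau4_distinct[OF d] quartic_coeffs_count[OF e, of \<sigma> s] by (simp add: quartic_vars_def)
qed

lemma mset_eq_if_set_eq_distinct3:
  assumes "distinct [x, y, z]" "{j, k, l} = {x, y, z}"
  shows "mset [j, k, l] = mset [x, y, z]"
proof -
  have "card (set [j, k, l]) = length [j, k, l]" using assms by (simp add: card_insert_if)
  hence "distinct [j, k, l]" by (rule card_distinct)
  thus ?thesis using assms by (simp only: set_eq_iff_mset_eq_distinct[symmetric]) simp
qed

lemma set3_eq_iff_perm:
  assumes "distinct [x, y, z]"
  shows "{j,k,l} = {x,y,z} \<longleftrightarrow> (j,k,l) \<in> {(x,y,z),(x,z,y),(y,x,z),(y,z,x),(z,x,y),(z,y,x)}"
proof
  assume h: "{j,k,l} = {x,y,z}"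
  have "x \<in> {j,k,l}" "y \<in> {j,k,l}" "z \<in> {j,k,l}" "j \<in> {x,y,z}" "k \<in> {x,y,z}" "l \<in> {x,y,z}"
    using h by auto
  then show "(j,k,l) \<in> {(x,y,z),(x,z,y),(y,x,z),(y,z,x),(z,x,y),(z,y,x)}" using assms by auto
qed (auto simp: insert_commute)

lemma sum_set_eq_triple:
  fixes g :: "nat \<Rightarrow> nat \<Rightarrow> nat \<Rightarrow> real"
  assumes d: "distinct [x, y, z]" and lt: "x < n" "y < n" "z < n"
    and g: "\<And>j k l. mset [j, k, l] = mset [x, y, z] \<Longrightarrow> g j k l = G"
  shows "(\<Sum>j<n. \<Sum>k<n. \<Sum>l<n. if {j,k,l} = {x,y,z} then g j k l else 0) = 6 * G"
proof -
  let ?P = "{(x,y,z),(x,z,y),(y,x,z),(y,z,x),(z,x,y),(z,y,x)}"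
  let ?C = "{..<n} \<times> {..<n} \<times> {..<n}"
  have "(\<Sum>j<n. \<Sum>k<n. \<Sum>l<n. if {j,k,l} = {x,y,z} then g j k l else 0)
      = (\<Sum>(j,k,l)\<in>?C. if {j,k,l} = {x,y,z} then g j k l else 0)"
    by (simp add: sum.cartesian_product case_prod_beta)
  also have "\<dots> = (\<Sum>\<tau>\<in>?C. if \<tau> \<in> ?P then G else 0)"
  proof (intro sum.cong refl)
    fix \<tau> assume "\<tau> \<in> ?C"
    obtain j k l where \<tau>: "\<tau> = (j,k,l)" by (cases \<tau>) auto
    show "(case \<tau> of (j,k,l) \<Rightarrow> if {j,k,l} = {x,y,z} then g j k l else 0) = (if \<tau> \<in> ?P then G else 0)"
    proof (cases "{j,k,l} = {x,y,z}")
      case True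
      then have "(j,k,l) \<in> ?P" using set3_eq_iff_perm[OF d, of j k l] by blast
      moreover have "g j k l = G" using True by (intro g mset_eq_if_set_eq_distinct3[OF d])
      ultimately show ?thesis by (simp only: \<tau> case_prod_conv if_P[OF True] if_P)
    next
      case False
      then have "(j,k,l) \<notin> ?P" using set3_eq_iff_perm[OF d, of j k l] by blast
      then show ?thesis by (simp only: \<tau> case_prod_conv if_not_P[OF False] if_False)
    qed
  qed
  also have "\<dots> = (\<Sum>\<tau>\<in>?C \<inter> ?P. G)" by (rule sum.inter_restrict[symmetric]) simp
  also have "?C \<inter> ?P = ?P" by (rule Int_absorb1) (use lt in simp)
  also have "(\<Sum>\<tau>\<in>?P. G) = 6 * G" using d by simp
  finally show ?thesis .
qed

lemma sum_swap4:
  fixes f :: "nat \<Rightarrow> nat \<Rightarrow> nat \<Rightarrow> 'e \<Rightarrow> real"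
  shows "(\<Sum>j\<in>A. \<Sum>k\<in>B. \<Sum>l\<in>C. \<Sum>e\<in>E. f j k l e) = (\<Sum>e\<in>E. \<Sum>j\<in>A. \<Sum>k\<in>B. \<Sum>l\<in>C. f j k l e)"
proof -
  have "(\<Sum>j\<in>A. \<Sum>k\<in>B. \<Sum>l\<in>C. \<Sum>e\<in>E. f j k l e) = (\<Sum>j\<in>A. \<Sum>k\<in>B. \<Sum>e\<in>E. \<Sum>l\<in>C. f j k l e)"
    by (intro sum.cong refl) (rule sum.swap)
  also have "\<dots> = (\<Sum>j\<in>A. \<Sum>e\<in>E. \<Sum>k\<in>B. \<Sum>l\<in>C. f j k l e)"
    by (intro sum.cong refl) (rule sum.swap)
  also have "\<dots> = (\<Sum>e\<in>E. \<Sum>j\<in>A. \<Sum>k\<in>B. \<Sum>l\<in>C. f j k l e)"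
    by (rule sum.swap)
  finally show ?thesis .
qed

lemma sum_Tq_triple_tensor:
  assumes p: "1 \<le> p" and n: "4*p \<le> n" and \<sigma>: "\<And>e. e \<in> {..<p}\<times>{..<p} \<Longrightarrow> \<sigma> e \<in> {-1,1}"
  shows "(\<Sum>j<n. \<Sum>k<n. \<Sum>l<n. Tq (quartic_coeffs p \<sigma> s) (4*p-1) j k l * triple_tensor p \<sigma> j k l)
    = real (p*p) / (4 * s)"
proof -
  let ?I = "{..<p}\<times>{..<p}"
  let ?T = "Tq (quartic_coeffs p \<sigma> s) (4*p-1)"
  have "(\<Sum>j<n. \<Sum>k<n. \<Sum>l<n. ?T j k l * triple_tensor p \<sigma> j k l)
      = (\<Sum>j<n. \<Sum>k<n. \<Sum>l<n. \<Sum>e\<in>?I. if {j,k,l} = triple p e then \<sigma> e * ?T j k l else 0)"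
    unfolding triple_tensor_def sum_distrib_left by (intro sum.cong refl) (simp add: mult.commute)
  also have "\<dots> = (\<Sum>e\<in>?I. \<Sum>j<n. \<Sum>k<n. \<Sum>l<n. if {j,k,l} = triple p e then \<sigma> e * ?T j k l else 0)"
    by (rule sum_swap4)
  also have "\<dots> = (\<Sum>e\<in>?I. 6 * (\<sigma> e * (\<sigma> e / s / 24)))"
  proof (intro sum.cong refl)
    fix e assume e: "e \<in> ?I"
    obtain a b where ab: "e = (a,b)" "a < p" "b < p" using e by auto
    have d: "distinct [a, p+b, 2*p+a+b]" using ab by auto
    have tr: "triple p e = {a, p+b, 2*p+a+b}" using ab by (simp add: triple_def)
    have "\<sigma> e * ?T j k l = \<sigma> e * (\<sigma> e / s / 24)" if "mset [j,k,l] = mset [a, p+b, 2*p+a+b]" for j k l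
    proof -
      have "?T j k l = ?T a (p+b) (2*p+a+b)" using that by (intro Tq_mset_eq) simp
      then show ?thesis using Tq_quartic_coeffs[OF e, of \<sigma> s] ab by simp
    qed
    then show "(\<Sum>j<n. \<Sum>k<n. \<Sum>l<n. if {j,k,l} = triple p e then \<sigma> e * ?T j k l else 0)
      = 6 * (\<sigma> e * (\<sigma> e / s / 24))"
      unfolding tr using ab n by (intro sum_set_eq_triple[OF d]) auto
  qed
  also have "\<dots> = (\<Sum>e\<in>?I. 1 / (4 * s))"
  proof (intro sum.cong refl)
    fix e assume "e \<in> ?I"
    hence "\<sigma> e * \<sigma> e = 1" using \<sigma>[of e] by auto
    thus "6 * (\<sigma> e * (\<sigma> e / s / 24)) = 1 / (4 * s)" by (simp add: field_simps)
  qed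
  also have "\<dots> = real (p*p) / (4 * s)" by simp
  finally show ?thesis .
qed

lemma tensor_eval_corner_entry:
  assumes p: "1 \<le> p" and n: "4*p \<le> n" and \<sigma>: "\<And>e. e \<in> {..<p}\<times>{..<p} \<Longrightarrow> \<sigma> e \<in> {-1,1}"
  shows "tensor_eval (2*n+2) n (quartic_coeffs p \<sigma> s) (graded_family n (4*p-1) (triple_tensor p \<sigma>)) $$ (2*n+1, 0)
    = real (p*p) / s"
proof -
  let ?A = "graded_family n (4*p-1) (triple_tensor p \<sigma>)"
  let ?T = "Tq (quartic_coeffs p \<sigma> s)"
  have "tensor_eval (2*n+2) n (quartic_coeffs p \<sigma> s) ?A $$ (2*n+1, 0)
     = (\<Sum>i<n. \<Sum>j<n. \<Sum>k<n. \<Sum>l<n. ?T i j k l * ((?A i * ?A j * ?A k * ?A l) $$ (2*n+1, 0)))"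
    unfolding tensor_eval_def by simp
  also have "\<dots> = 4 * (\<Sum>j<n. \<Sum>k<n. \<Sum>l<n. ?T (4*p-1) j k l * triple_tensor p \<sigma> j k l)"
    using p n by (intro tensor_eval_graded_family_corner sparse_sym_tensor_triple_tensor \<sigma>
        triple_tensor_last_var Tq_mset_eq) auto
  also have "\<dots> = real (p*p) / s"
    using sum_Tq_triple_tensor[OF p n \<sigma>, where s=s] by simp
  finally show ?thesis .
qed

lemma pow2_mul_exp_neg_lt_1:
  assumes p: "9 \<le> p"
  shows "(2::real) ^ (4*p+1) * exp (- (9 * real p)) < 1"
proof -
  have "(2::real) ^ (4*p+1) < 2 ^ (9*p)" using p by (intro power_strict_increasing) auto
  also have "(2::real) ^ (9*p) \<le> exp 1 ^ (9*p)"
    using exp_ge_add_one_self[of 1] by (intro power_mono) auto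
  also have "exp 1 ^ (9*p) = exp (9 * real p)" by (simp add: exp_of_nat_mult[symmetric])
  finally show ?thesis by (simp add: exp_minus field_simps)
qed

lemma exists_triple_signs:
  assumes p: "9 \<le> p"
  shows "\<exists>\<sigma>. (\<forall>e\<in>{..<p}\<times>{..<p}. \<sigma> e \<in> {-1,1}) \<and>
    (\<forall>x. (\<forall>m<4*p. x m \<in> {-1,1}) \<longrightarrow> \<bar>triple_form p \<sigma> x\<bar> \<le> 6 * real p * sqrt (real p))"
proof -
  let ?I = "{..<p}\<times>{..<p}"
  let ?Y = "PiE {..<4*p} (\<lambda>_. {-1,1::real})"
  let ?c = "\<lambda>y e. y (fst e) * y (p + snd e) * y (2*p + fst e + snd e)"
  define l where "l = 3 / sqrt (real p)"
  define s where "s = 6 * real p * sqrt (real p)"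
  have sp: "3 \<le> sqrt (real p)"
  proof -
    have "sqrt 9 \<le> sqrt (real p)" using p by (intro real_sqrt_le_mono) simp
    thus ?thesis by simp
  qed
  have sq: "sqrt (real p) * sqrt (real p) = real p" by simp
  have c: "?c y e \<in> {-1,1}" if yY: "y \<in> ?Y" and eI: "e \<in> ?I" for y e
  proof -
    obtain a b where ab: "e = (a,b)" "a < p" "b < p" using eI by auto
    have "y a \<in> {-1,1}" "y (p+b) \<in> {-1,1}" "y (2*p+a+b) \<in> {-1,1}" using yY ab by (auto simp: PiE_iff)
    then show ?thesis using ab by auto
  qed
  have l0: "0 \<le> l" unfolding l_def by simp
  have sp0: "0 < sqrt (real p)" using sp by linarith
  have l1: "l \<le> 1" unfolding l_def using sp sp0 by (simp add: pos_divide_le_eq)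
  have cY: "card ?Y = 2 ^ (4*p)" by (simp add: card_PiE numeral_2_eq_2)
  have cI: "card ?I = p * p" by (simp add: card_cartesian_product)
  have exponent: "real (card ?I) * l^2 - l * s = - 9 * real p"
    unfolding cI l_def s_def using sp sq by (simp add: field_simps power2_eq_square)
  have "real (card ?Y) * (2 * exp (real (card ?I) * l^2 - l * s)) = 2 ^ (4*p+1) * exp (- (9 * real p))"
    unfolding exponent cY by simp
  also have "\<dots> < 1" by (rule pow2_mul_exp_neg_lt_1[OF p])
  finally have small: "real (card ?Y) * (2 * exp (real (card ?I) * l^2 - l * s)) < 1" .
  have fI: "finite ?I" by simp
  have fY: "finite ?Y" by (intro finite_PiE) auto
  obtain \<sigma> where \<sigma>: "\<sigma> \<in> PiE ?I (\<lambda>_. {-1,1::real})" "\<forall>y\<in>?Y. \<bar>\<Sum>e\<in>?I. \<sigma> e * ?c y e\<bar> \<le> s"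
    using exists_signs_abs_sums_le[OF fI fY c l0 l1 small] by (rule bexE)
  have "\<bar>triple_form p \<sigma> x\<bar> \<le> s" if x: "\<forall>m<4*p. x m \<in> {-1,1}" for x
  proof -
    have eq: "triple_form p \<sigma> x = (\<Sum>e\<in>?I. \<sigma> e * ?c (restrict x {..<4*p}) e)"
      unfolding triple_form_def by (intro sum.cong refl) auto
    have "restrict x {..<4*p} \<in> ?Y" using x by auto
    then have "\<bar>\<Sum>e\<in>?I. \<sigma> e * ?c (restrict x {..<4*p}) e\<bar> \<le> s" using \<sigma>(2) by blast
    then show ?thesis unfolding eq .
  qed
  then show ?thesis
    unfolding s_def using \<sigma>(1) by (intro exI[of _ \<sigma>]) auto
qed

lemma sqrt_le_sqrt_div4:
  assumes "36 \<le> n"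
  shows "1/17 * sqrt (real n) \<le> sqrt (real (n div 4)) / 6"
proof -
  have "36 * n \<le> 289 * (n div 4)" using assms by linarith
  then have "sqrt (36 * real n) \<le> sqrt (289 * real (n div 4))"
    by (intro real_sqrt_le_mono) (simp only: of_nat_mult[symmetric] of_nat_le_iff of_nat_numeral)
  then show ?thesis by (simp add: real_sqrt_mult)
qed

lemma quartic_form_with_large_tensor_eval:
  assumes n: "36 \<le> n"
  shows "\<exists>(d :: (nat \<Rightarrow> nat) \<Rightarrow> real) (A :: nat \<Rightarrow> real mat).
         (\<forall>\<alpha>. \<alpha> \<notin> ml_quartic_exps n \<longrightarrow> d \<alpha> = 0) \<and>
         (\<forall>x. (\<forall>m<n. x m = 1 \<or> x m = -1) \<longrightarrow> \<bar>qform n d x\<bar> \<le> 1) \<and>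
         (\<forall>i<n. A i \<in> carrier_mat (2*n+2) (2*n+2) \<and> mat_op_norm (A i) \<le> 1) \<and>
         (\<forall>i<n. \<forall>j<n. A i * A j = A j * A i) \<and>
         mat_op_norm (tensor_eval (2*n+2) n d A) \<ge> 1/17 * sqrt (real n)"
proof -
  define p where "p = n div 4"
  have p: "9 \<le> p" "4*p \<le> n" using n unfolding p_def by auto
  define s where "s = 6 * real p * sqrt (real p)"
  have s: "0 < s" using p unfolding s_def by simp
  obtain \<sigma> where \<sigma>: "\<forall>e\<in>{..<p}\<times>{..<p}. \<sigma> e \<in> {-1,1}"
    and bound: "\<forall>x. (\<forall>m<4*p. x m \<in> {-1,1}) \<longrightarrow> \<bar>triple_form p \<sigma> x\<bar> \<le> s"
    using exists_triple_signs[OF p(1)] unfolding s_def by blast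
  define d where "d = quartic_coeffs p \<sigma> s"
  define A where "A = graded_family n (4*p-1) (triple_tensor p \<sigma>)"
  have t: "sparse_sym_tensor (triple_tensor p \<sigma>)" by (rule sparse_sym_tensor_triple_tensor) (use \<sigma> in blast)
  have q: "\<bar>qform n d x\<bar> \<le> 1" if "\<forall>m<n. x m = 1 \<or> x m = -1" for x
    unfolding d_def using p(1) by (intro abs_qform_quartic_coeffs_le_1[OF p(2) _ s that bound]) simp
  have "1/17 * sqrt (real n) \<le> sqrt (real p) / 6" unfolding p_def by (rule sqrt_le_sqrt_div4[OF n])
  also have "\<dots> = real (p*p) / s" using p unfolding s_def by (simp add: field_simps)
  also have "\<dots> = tensor_eval (2*n+2) n d A $$ (2*n+1, 0)"
    unfolding d_def A_def using p \<sigma> by (intro tensor_eval_corner_entry[symmetric]) auto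
  also have "\<dots> \<le> mat_op_norm (tensor_eval (2*n+2) n d A)"
    by (rule order_trans[OF abs_ge_self abs_entry_le_mat_op_norm[of _ "2*n+2"]])
      (simp_all add: tensor_eval_def)
  finally have large: "1/17 * sqrt (real n) \<le> mat_op_norm (tensor_eval (2*n+2) n d A)" .
  have "\<forall>\<alpha>. \<alpha> \<notin> ml_quartic_exps n \<longrightarrow> d \<alpha> = 0"
    unfolding d_def using quartic_coeffs_outside[OF p(2)] by blast
  moreover have "\<forall>i<n. A i \<in> carrier_mat (2*n+2) (2*n+2) \<and> mat_op_norm (A i) \<le> 1"
    unfolding A_def using graded_family_op_norm_le[OF t] by simp
  moreover have "\<forall>i<n. \<forall>j<n. A i * A j = A j * A i"
    unfolding A_def using graded_family_commute[OF t] by blast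
  ultimately show ?thesis using q large by (intro exI[of _ d] exI[of _ A]) blast
qed

theorem corollary4p5:
  shows "\<exists>c::real. 0 < c \<and> c \<le> 1 \<and>
    (\<exists>N0::nat. \<forall>n\<ge>N0. n > 0 \<longrightarrow>
      (\<exists>(d :: (nat \<Rightarrow> nat) \<Rightarrow> real) (A :: nat \<Rightarrow> real mat).
         (\<forall>\<alpha>. \<alpha> \<notin> ml_quartic_exps n \<longrightarrow> d \<alpha> = 0) \<and>
         (\<forall>x. (\<forall>m<n. x m = 1 \<or> x m = -1) \<longrightarrow> \<bar>qform n d x\<bar> \<le> 1) \<and>
         (\<forall>i<n. A i \<in> carrier_mat (2*n+2) (2*n+2) \<and> mat_op_norm (A i) \<le> 1) \<and>
         (\<forall>i<n. \<forall>j<n. A i * A j = A j * A i) \<and>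
         mat_op_norm (tensor_eval (2*n+2) n d A) \<ge> c * sqrt (real n)))"
proof (intro exI[of _ "1/17"] conjI exI[of _ 36] allI impI)
  fix n :: nat assume "36 \<le> n"
  then show "\<exists>d A. (\<forall>\<alpha>. \<alpha> \<notin> ml_quartic_exps n \<longrightarrow> d \<alpha> = 0) \<and>
         (\<forall>x. (\<forall>m<n. x m = 1 \<or> x m = -1) \<longrightarrow> \<bar>qform n d x\<bar> \<le> 1) \<and>
         (\<forall>i<n. A i \<in> carrier_mat (2*n+2) (2*n+2) \<and> mat_op_norm (A i) \<le> 1) \<and>
         (\<forall>i<n. \<forall>j<n. A i * A j = A j * A i) \<and>
         mat_op_norm (tensor_eval (2*n+2) n d A) \<ge> 1/17 * sqrt (real n)"
    by (rule quartic_form_with_large_tensor_eval)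
qed simp_all

end
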